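(* Let $n\ge1$ and $T=\{\sigma\in L_{n+1}:\mathrm{des}_A(\sigma)=0\}$. (1) For every $B\subseteq[n+1]$ there exists a unique $\sigma\in T$ such that $B=\mathrm{Neg}(\sigma^{-1})$. (2) For every $B\subseteq[n+1]$, \[ \{\pi\in L_{n+1}:\mathrm{Neg}(\pi^{-1})\subseteq B\}=\biguplus_{u\in A_{n+1}}\{\sigma u:\sigma\in T,\ \mathrm{Neg}(\sigma^{-1})\subseteq B\}, \] where $\uplus$ denotes disjoint union.
   Context: $[a]=\{1,\dots,a\}$. For $m\ge1$, $B_m$ is the group of bijections $\sigma$ of $\{\pm1,\dots,\pm m\}$ with $\sigma(-i)=-\sigma(i)$, written in window notation $\sigma=[\sigma(1),\dots,\sigma(m)]$, with product $(\sigma\tau)(i)=\sigma(\tau(i))$. $S_m\subseteq B_m$ consists of the elements with all $\sigma(i)>0$, and $A_m\subseteq S_m$ is the alternating group. The Coxeter generators of $B_m$ are $s_0=[-1,2,\dots,m]$ and $s_i=$ the transposition of $i$ and $i+1$ ($1\le i\le m-1$); $\ell_B(\sigma)$ is the length of $\sigma$ with respect to $\{s_0,\dots,s_{m-1}\}$. For $\sigma\in B_m$ let $|\sigma|\in S_m$ be $i\mapsto|\sigma(i)|$, and $L_m=\{\sigma\in B_m:|\sigma|\in A_m\}$. $\mathrm{Neg}(\sigma)=\{i\in[m]:\sigma(i)<0\}$. $\mathrm{del}_B(\sigma)=\#\{2\le j\le m:\sigma(i)>\sigma(j)\text{ for all }1\le i<j\}$. $\ell_L(\sigma)=\ell_B(\sigma)-\mathrm{del}_B(\sigma)$.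 For $1\le i\le n-1$ let $a_i=s_1s_{i+1}$. For $\pi\in L_{n+1}$: $\mathrm{Des}_A(\pi)=\{1\le i\le n-1:\ell_L(\pi a_i)\le\ell_L(\pi)\}$ and $\mathrm{des}_A(\pi)=|\mathrm{Des}_A(\pi)|$. *)

theory Defs
  imports "HOL-Combinatorics.Permutations"
begin

text \<open>Signed permutations of \<open>{\<plusminus>1,...,\<plusminus>m}\<close> are represented as functions
  \<open>int \<Rightarrow> int\<close> that are the identity outside \<open>{\<plusminus>1,...,\<plusminus>m}\<close>.
  The product \<open>\<sigma>\<tau>\<close> is \<open>\<sigma> \<circ> \<tau>\<close>, the inverse is \<open>inv \<sigma>\<close>.\<close>

definition signset :: "nat \<Rightarrow> int set" where
  "signset m = {- int m..int m} - {0}"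

definition Bgrp :: "nat \<Rightarrow> (int \<Rightarrow> int) set" where
  "Bgrp m = {\<sigma>. bij_betw \<sigma> (signset m) (signset m) \<and> (\<forall>i. \<sigma> (- i) = - \<sigma> i)
                 \<and> (\<forall>x. x \<notin> signset m \<longrightarrow> \<sigma> x = x)}"

definition Sgrp :: "nat \<Rightarrow> (int \<Rightarrow> int) set" where
  "Sgrp m = {\<sigma> \<in> Bgrp m. \<forall>i\<in>{1..int m}. \<sigma> i > 0}"

definition Agrp :: "nat \<Rightarrow> (int \<Rightarrow> int) set" where
  "Agrp m = {\<sigma> \<in> Sgrp m. evenperm (\<lambda>x. if 0 < x then \<sigma> x else x)}"

definition absperm :: "(int \<Rightarrow> int) \<Rightarrow> int \<Rightarrow> int" where
  "absperm \<sigma> x = sgn x * \<bar>\<sigma> \<bar>x\<bar>\<bar>"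

definition Lset :: "nat \<Rightarrow> (int \<Rightarrow> int) set" where
  "Lset m = {\<sigma> \<in> Bgrp m. absperm \<sigma> \<in> Agrp m}"

definition Neg :: "nat \<Rightarrow> (int \<Rightarrow> int) \<Rightarrow> int set" where
  "Neg m \<sigma> = {i \<in> {1..int m}. \<sigma> i < 0}"

definition sgen :: "int \<Rightarrow> int \<Rightarrow> int" where
  "sgen i x = (if i = 0 then (if \<bar>x\<bar> = 1 then - x else x)
     else if x = i then i + 1 else if x = i + 1 then i
     else if x = - i then - (i + 1) else if x = - (i + 1) then - i else x)"

definition wordprod :: "int list \<Rightarrow> int \<Rightarrow> int" where
  "wordprod w = foldr (\<lambda>j f. sgen j \<circ> f) w id"

definition lenB :: "nat \<Rightarrow> (int \<Rightarrow> int) \<Rightarrow> nat" where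
  "lenB m \<sigma> = (LEAST k. \<exists>w. length w = k \<and> set w \<subseteq> {0..int m - 1} \<and> wordprod w = \<sigma>)"

definition delB :: "nat \<Rightarrow> (int \<Rightarrow> int) \<Rightarrow> nat" where
  "delB m \<sigma> = card {j \<in> {2..int m}. \<forall>i \<in> {1..<j}. \<sigma> i > \<sigma> j}"

definition lenL :: "nat \<Rightarrow> (int \<Rightarrow> int) \<Rightarrow> int" where
  "lenL m \<sigma> = int (lenB m \<sigma>) - int (delB m \<sigma>)"

definition agen :: "int \<Rightarrow> int \<Rightarrow> int" where
  "agen i = sgen 1 \<circ> sgen (i + 1)"

definition DesA :: "nat \<Rightarrow> (int \<Rightarrow> int) \<Rightarrow> int set" where
  "DesA n \<pi> = {i \<in> {1..int n - 1}. lenL (n + 1) (\<pi> \<circ> agen i) \<le> lenL (n + 1) \<pi>}"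

definition desA :: "nat \<Rightarrow> (int \<Rightarrow> int) \<Rightarrow> nat" where
  "desA n \<pi> = card (DesA n \<pi>)"

end

theory Submission
  imports Defs
begin

text \<open>The fibres of \<open>\<pi> \<mapsto> Neg(\<pi>\<^sup>-\<^sup>1)\<close> on \<open>B_m\<close> are the right cosets of \<open>S_m\<close>: composing on
  the right with an unsigned permutation does not change which values occur with a negative sign,
  and two signed permutations with the same such values differ by an unsigned one. Intersected
  with \<open>L_m\<close>, whose elements are those whose underlying unsigned permutation is even, they become
  right cosets of \<open>A_m\<close>. Hence (2) holds for every set \<open>T \<subseteq> L_m\<close> that meets each fibre exactly
  once, and it remains to show (1).

  Using \<open>\<ell>\<^sub>B = inv + nsp + neg\<close> one computes the effect of every generator on \<open>\<ell>\<^sub>B\<close>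
  and on \<open>del\<^sub>B\<close>. It turns out that \<open>\<ell>\<^sub>L\<close> is invariant under \<open>s\<^sub>1\<close>, and that \<open>des\<^sub>A(\<pi>) = 0\<close>
  iff the window of \<open>\<pi>\<close> is increasing after possibly exchanging its first two entries. Each fibre
  contains exactly one signed permutation \<open>\<tau>\<close> with increasing window (the element of minimal
  length in it), and as \<open>s\<^sub>1\<close> is odd exactly one of \<open>\<tau>\<close>, \<open>\<tau> s\<^sub>1\<close> lies in \<open>L_m\<close>.\<close>

section \<open>Monotone maps on integer intervals\<close>

lemma mono_on_int_intervalI:
  fixes f :: "int \<Rightarrow> 'a::order"
  assumes "\<And>k. a \<le> k \<Longrightarrow> k < b \<Longrightarrow> f k \<le> f (k + 1)"
  shows "mono_on {a..b} f"
proof (rule mono_onI)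
  fix p q assume p: "p \<in> {a..b}" and "p \<le> q"
  have "q \<le> b \<longrightarrow> f p \<le> f q"
    using \<open>p \<le> q\<close>
  proof (induction q rule: int_ge_induct)
    case (step i)
    then show ?case using p assms[of i] by (auto intro: order_trans)
  qed simp
  then show "q \<in> {a..b} \<Longrightarrow> f p \<le> f q" by simp
qed

lemma strict_mono_on_int_interval_iff:
  fixes f :: "int \<Rightarrow> int"
  shows "strict_mono_on {a..b} f \<longleftrightarrow> (\<forall>k. a \<le> k \<longrightarrow> k < b \<longrightarrow> f k < f (k + 1))"
proof
  assume "\<forall>k. a \<le> k \<longrightarrow> k < b \<longrightarrow> f k < f (k + 1)"
  then have "mono_on {a..b} (\<lambda>k. f k - k)"
    by (intro mono_on_int_intervalI) force
  then show "strict_mono_on {a..b} f"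
    by (force intro: strict_mono_onI dest: mono_onD)
next
  assume "strict_mono_on {a..b} f"
  then show "\<forall>k. a \<le> k \<longrightarrow> k < b \<longrightarrow> f k < f (k + 1)"
    using strict_mono_onD[of "{a..b}" f] by simp
qed

lemma strict_mono_on_self_map_eq:
  fixes f :: "int \<Rightarrow> int"
  assumes "strict_mono_on {a..b} f" "f ` {a..b} \<subseteq> {a..b}" "x \<in> {a..b}"
  shows "f x = x"
proof -
  have "mono_on {a..b} (\<lambda>k. f k - k)"
    using assms(1) strict_mono_onD[of "{a..b}" f] by (intro mono_on_int_intervalI) force
  then have "f a - a \<le> f x - x" "f x - x \<le> f b - b"
    using assms(3) mono_onD[of "{a..b}" "\<lambda>k. f k - k"] by simp_all
  moreover have "f a \<in> {a..b}" "f b \<in> {a..b}"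
    using assms(2,3) by (auto simp: image_subset_iff)
  ultimately show ?thesis by simp
qed

section \<open>Signed permutations\<close>

lemma signset_iff: "x \<in> signset m \<longleftrightarrow> x \<noteq> 0 \<and> \<bar>x\<bar> \<le> int m"
  by (auto simp: signset_def)

lemma pos_in_signset: "x \<in> {1..int m} \<Longrightarrow> x \<in> signset m"
  by (simp add: signset_iff)

lemma Bgrp_iff: "\<sigma> \<in> Bgrp m \<longleftrightarrow> \<sigma> permutes signset m \<and> (\<forall>i. \<sigma> (- i) = - \<sigma> i)"
  unfolding Bgrp_def using bij_imp_permutes permutes_imp_bij permutes_not_in by fastforce

lemma Bgrp_permutes: "\<sigma> \<in> Bgrp m \<Longrightarrow> \<sigma> permutes signset m"
  and Bgrp_odd: "\<sigma> \<in> Bgrp m \<Longrightarrow> \<sigma> (- i) = - \<sigma> i"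
  by (simp_all add: Bgrp_iff)

lemma Bgrp_fixes: "\<sigma> \<in> Bgrp m \<Longrightarrow> x \<notin> signset m \<Longrightarrow> \<sigma> x = x"
  by (rule permutes_not_in[OF Bgrp_permutes])

lemma Bgrp_signset: "\<sigma> \<in> Bgrp m \<Longrightarrow> x \<in> signset m \<Longrightarrow> \<sigma> x \<in> signset m"
  by (simp add: permutes_in_image[OF Bgrp_permutes])

lemma Bgrp_inverses: "\<sigma> \<in> Bgrp m \<Longrightarrow> \<sigma> (inv \<sigma> x) = x" "\<sigma> \<in> Bgrp m \<Longrightarrow> inv \<sigma> (\<sigma> x) = x"
  by (simp_all add: permutes_inverses[OF Bgrp_permutes])

lemma Bgrp_eq_iff: "\<sigma> \<in> Bgrp m \<Longrightarrow> \<sigma> x = \<sigma> y \<longleftrightarrow> x = y"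
  by (metis Bgrp_inverses(2))

lemma Bgrp_bij: "\<sigma> \<in> Bgrp m \<Longrightarrow> bij \<sigma>"
  by (rule permutes_bij[OF Bgrp_permutes])

lemma id_Bgrp: "id \<in> Bgrp m"
  by (simp add: Bgrp_iff)

lemma Bgrp_comp: "\<sigma> \<in> Bgrp m \<Longrightarrow> \<tau> \<in> Bgrp m \<Longrightarrow> \<sigma> \<circ> \<tau> \<in> Bgrp m"
  by (simp add: Bgrp_iff permutes_compose)

lemma Bgrp_inv: assumes "\<sigma> \<in> Bgrp m" shows "inv \<sigma> \<in> Bgrp m"
proof -
  have "inv \<sigma> (- i) = - inv \<sigma> i" for i
    by (metis Bgrp_inverses[OF assms] Bgrp_odd[OF assms] minus_minus)
  then show ?thesis using assms by (simp add: Bgrp_iff permutes_inv)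
qed

lemma Bgrp_0: "Bgrp 0 = {id}"
proof -
  have "signset 0 = {}" by (auto simp: signset_iff)
  then show ?thesis by (auto simp: Bgrp_iff permutes_empty)
qed

lemma signed_fun_eqI:
  assumes "\<And>x. f (- x) = - f x" "\<And>x. g (- x) = - g x"
    and "\<And>x. x \<notin> signset m \<Longrightarrow> f x = x" "\<And>x. x \<notin> signset m \<Longrightarrow> g x = x"
    and "\<And>x. x \<in> {1..int m} \<Longrightarrow> f x = g x"
  shows "f = g"
proof
  fix x
  show "f x = g x"
  proof (cases "x \<in> signset m")
    case True
    then have "x \<in> {1..int m} \<or> - x \<in> {1..int m}" by (auto simp: signset_iff)
    then show ?thesis by (metis assms(1,2,5) minus_minus)
  qed (simp add: assms(3,4))
qed

lemma Bgrp_eqI: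
  "\<sigma> \<in> Bgrp m \<Longrightarrow> \<tau> \<in> Bgrp m \<Longrightarrow> (\<And>x. x \<in> {1..int m} \<Longrightarrow> \<sigma> x = \<tau> x) \<Longrightarrow> \<sigma> = \<tau>"
  by (rule signed_fun_eqI) (auto simp: Bgrp_odd Bgrp_fixes)

lemma Bgrp_involutionI:
  assumes "\<And>x. f (f x) = x" "\<And>x. f (- x) = - f x"
    and "\<And>x. x \<in> signset m \<Longrightarrow> f x \<in> signset m" "\<And>x. x \<notin> signset m \<Longrightarrow> f x = x"
  shows "f \<in> Bgrp m"
proof -
  have "bij_betw f (signset m) (signset m)"
    by (rule bij_betw_byWitness[where f' = f]) (use assms in auto)
  then show ?thesis using assms unfolding Bgrp_def by blast
qed

lemma sgen_sgen: "0 \<le> j \<Longrightarrow> sgen j (sgen j x) = x"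
  by (simp add: sgen_def; arith)

lemma sgen_Bgrp: assumes "0 \<le> j" "j < int m" shows "sgen j \<in> Bgrp m"
proof (rule Bgrp_involutionI)
  show "sgen j (- x) = - sgen j x" for x using assms(1) by (simp add: sgen_def; arith)
  show "sgen j x \<in> signset m" if "x \<in> signset m" for x
    using assms that unfolding signset_iff sgen_def by (simp; arith)
  show "sgen j x = x" if "x \<notin> signset m" for x
    using assms that unfolding signset_iff sgen_def by (simp; arith)
qed (rule sgen_sgen[OF assms(1)])

lemma sgen_pos: "1 \<le> k \<Longrightarrow> 0 < x \<Longrightarrow> sgen k x = (if x = k then k + 1 else if x = k + 1 then k else x)"
  by (simp add: sgen_def)

lemma sgen_one: "sgen 1 1 = 2" "sgen 1 2 = 1" "3 \<le> k \<Longrightarrow> sgen 1 k = k"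
  by (simp_all add: sgen_def)

lemma comp_sgen_sgen: "0 \<le> j \<Longrightarrow> \<sigma> \<circ> sgen j \<circ> sgen j = \<sigma>"
  by (simp add: fun_eq_iff sgen_sgen)

lemma Sgrp_Bgrp: "u \<in> Sgrp m \<Longrightarrow> u \<in> Bgrp m"
  by (simp add: Sgrp_def)

lemma SgrpI: "u \<in> Bgrp m \<Longrightarrow> (\<And>x. x \<in> {1..int m} \<Longrightarrow> 0 < u x) \<Longrightarrow> u \<in> Sgrp m"
  by (simp add: Sgrp_def)

lemma Sgrp_sgn: assumes "u \<in> Sgrp m" shows "sgn (u x) = sgn x"
proof -
  have pos: "0 < u y" if "y \<in> {1..int m}" for y using assms that by (simp add: Sgrp_def)
  consider "x \<in> {1..int m}" | "- x \<in> {1..int m}" | "x \<notin> signset m"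
    by (force simp: signset_iff)
  then show ?thesis
  proof cases
    case 2
    then show ?thesis using pos[of "- x"] Bgrp_odd[OF Sgrp_Bgrp[OF assms], of x] by simp
  qed (use pos Bgrp_fixes[OF Sgrp_Bgrp[OF assms]] in auto)
qed

lemma Sgrp_pos_iff: "u \<in> Sgrp m \<Longrightarrow> 0 < u x \<longleftrightarrow> 0 < x"
  and Sgrp_neg_iff: "u \<in> Sgrp m \<Longrightarrow> u x < 0 \<longleftrightarrow> x < 0"
  by (metis Sgrp_sgn sgn_greater, metis Sgrp_sgn sgn_less)

lemma Sgrp_abs: assumes "u \<in> Sgrp m" shows "\<bar>u x\<bar> = u \<bar>x\<bar>"
  using Sgrp_neg_iff[OF assms, of x] Bgrp_odd[OF Sgrp_Bgrp[OF assms], of x] by (simp add: abs_if)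

lemma Sgrp_atLeastAtMost: assumes "u \<in> Sgrp m" "x \<in> {1..int m}" shows "u x \<in> {1..int m}"
  using Bgrp_signset[OF Sgrp_Bgrp[OF assms(1)], of x] Sgrp_pos_iff[OF assms(1), of x] assms(2)
  by (auto simp: signset_iff)

lemma Sgrp_comp: "u \<in> Sgrp m \<Longrightarrow> v \<in> Sgrp m \<Longrightarrow> u \<circ> v \<in> Sgrp m"
  by (intro SgrpI Bgrp_comp) (auto simp: Sgrp_Bgrp Sgrp_pos_iff)

lemma Sgrp_inv: assumes "u \<in> Sgrp m" shows "inv u \<in> Sgrp m"
proof (rule SgrpI)
  show "inv u \<in> Bgrp m" by (rule Bgrp_inv[OF Sgrp_Bgrp[OF assms]])
  show "0 < inv u x" if "x \<in> {1..int m}" for x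
    using that Sgrp_pos_iff[OF assms, of "inv u x"] Bgrp_inverses(1)[OF Sgrp_Bgrp[OF assms]] by simp
qed

lemma sgen_Sgrp: "1 \<le> k \<Longrightarrow> k < int m \<Longrightarrow> sgen k \<in> Sgrp m"
  by (intro SgrpI sgen_Bgrp) (auto simp: sgen_pos)

lemma id_Sgrp: "id \<in> Sgrp m"
  by (simp add: Sgrp_def id_Bgrp)

lemma Sgrp_eq_id_if_strict_mono:
  assumes "u \<in> Sgrp m" "strict_mono_on {1..int m} u"
  shows "u = id"
proof -
  have "u ` {1..int m} \<subseteq> {1..int m}" using Sgrp_atLeastAtMost[OF assms(1)] by blast
  then show ?thesis
    using strict_mono_on_self_map_eq[OF assms(2)] by (intro Bgrp_eqI[OF Sgrp_Bgrp[OF assms(1)] id_Bgrp]) simp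
qed

lemma Neg_subset: "Neg m \<sigma> \<subseteq> {1..int m}"
  by (auto simp: Neg_def)

lemma abs_in_Neg_inv_iff:
  assumes "\<sigma> \<in> Bgrp m" "x \<in> {1..int m}"
  shows "\<bar>\<sigma> x\<bar> \<in> Neg m (inv \<sigma>) \<longleftrightarrow> \<sigma> x < 0"
proof -
  have "\<sigma> x \<in> signset m" by (rule Bgrp_signset[OF assms(1) pos_in_signset[OF assms(2)]])
  moreover have "inv \<sigma> (- \<sigma> x) = - x"
    using Bgrp_odd[OF Bgrp_inv[OF assms(1)]] Bgrp_inverses(2)[OF assms(1)] by metis
  ultimately show ?thesis
    using assms(2) Bgrp_inverses(2)[OF assms(1), of x] by (auto simp: Neg_def signset_iff abs_if)
qed

lemma Neg_inv_comp_Sgrp: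
  assumes "\<sigma> \<in> Bgrp m" "u \<in> Sgrp m"
  shows "Neg m (inv (\<sigma> \<circ> u)) = Neg m (inv \<sigma>)"
proof -
  have "inv (\<sigma> \<circ> u) = inv u \<circ> inv \<sigma>"
    by (rule o_inv_distrib[OF Bgrp_bij[OF assms(1)] Bgrp_bij[OF Sgrp_Bgrp[OF assms(2)]]])
  then show ?thesis
    using Sgrp_neg_iff[OF Sgrp_inv[OF assms(2)]] by (simp add: Neg_def)
qed

definition flip :: "int set \<Rightarrow> int \<Rightarrow> int" where
  "flip B x = (if \<bar>x\<bar> \<in> B then - x else x)"

lemma flip_flip: "flip B \<circ> flip B = id"
  by (simp add: fun_eq_iff flip_def)

lemma flip_Bgrp: assumes "B \<subseteq> {1..int m}" shows "flip B \<in> Bgrp m"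
  by (rule Bgrp_involutionI) (use assms in \<open>auto simp: flip_def signset_iff\<close>)

lemma Neg_inv_flip: assumes "B \<subseteq> {1..int m}" shows "Neg m (inv (flip B)) = B"
proof -
  have "inv (flip B) = flip B" by (rule inv_unique_comp) (simp_all add: flip_flip)
  then show ?thesis using assms by (auto simp: Neg_def flip_def)
qed

lemma absperm_eq_flip_comp:
  assumes "\<sigma> \<in> Bgrp m"
  shows "absperm \<sigma> = flip (Neg m (inv \<sigma>)) \<circ> \<sigma>"
proof (rule signed_fun_eqI)
  have flip: "flip (Neg m (inv \<sigma>)) \<circ> \<sigma> \<in> Bgrp m" by (intro Bgrp_comp flip_Bgrp Neg_subset assms)
  show "(flip (Neg m (inv \<sigma>)) \<circ> \<sigma>) (- x) = - (flip (Neg m (inv \<sigma>)) \<circ> \<sigma>) x" for x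
    by (rule Bgrp_odd[OF flip])
  show "(flip (Neg m (inv \<sigma>)) \<circ> \<sigma>) x = x" if "x \<notin> signset m" for x
    by (rule Bgrp_fixes[OF flip that])
  show "absperm \<sigma> (- x) = - absperm \<sigma> x" for x
    by (simp add: absperm_def)
  show "absperm \<sigma> x = x" if "x \<notin> signset m" for x
    using that Bgrp_fixes[OF assms, of "\<bar>x\<bar>"] by (auto simp: absperm_def signset_iff sgn_mult_abs)
  show "absperm \<sigma> x = (flip (Neg m (inv \<sigma>)) \<circ> \<sigma>) x" if "x \<in> {1..int m}" for x
    using that abs_in_Neg_inv_iff[OF assms that] by (auto simp: absperm_def flip_def)
qed

lemma absperm_Sgrp: assumes "\<sigma> \<in> Bgrp m" shows "absperm \<sigma> \<in> Sgrp m"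
proof (rule SgrpI)
  show "absperm \<sigma> \<in> Bgrp m"
    unfolding absperm_eq_flip_comp[OF assms] by (intro Bgrp_comp flip_Bgrp Neg_subset assms)
  show "0 < absperm \<sigma> x" if "x \<in> {1..int m}" for x
    using that Bgrp_signset[OF assms, of x] by (auto simp: absperm_def signset_iff)
qed

lemma absperm_comp_Sgrp:
  assumes "u \<in> Sgrp m"
  shows "absperm (\<sigma> \<circ> u) = absperm \<sigma> \<circ> u"
  using Sgrp_sgn[OF assms] Sgrp_abs[OF assms] by (simp add: fun_eq_iff absperm_def)

text \<open>Both \<open>\<sigma>\<close> and \<open>\<sigma>'\<close> become unsigned after flipping the same set of values.\<close>
lemma inv_comp_Sgrp_if_Neg_inv_eq:
  assumes "\<sigma> \<in> Bgrp m" "\<sigma>' \<in> Bgrp m" "Neg m (inv \<sigma>) = Neg m (inv \<sigma>')"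
  shows "inv \<sigma> \<circ> \<sigma>' \<in> Sgrp m"
proof -
  define f where "f = flip (Neg m (inv \<sigma>))"
  have f: "f \<in> Bgrp m" unfolding f_def by (intro flip_Bgrp Neg_subset)
  have "inv (absperm \<sigma>) \<circ> absperm \<sigma>' = inv (f \<circ> \<sigma>) \<circ> (f \<circ> \<sigma>')"
    unfolding absperm_eq_flip_comp[OF assms(1)] absperm_eq_flip_comp[OF assms(2)] assms(3) f_def ..
  also have "\<dots> = inv \<sigma> \<circ> (inv f \<circ> f) \<circ> \<sigma>'"
    by (simp add: o_inv_distrib[OF Bgrp_bij[OF f] Bgrp_bij[OF assms(1)]] o_assoc)
  also have "\<dots> = inv \<sigma> \<circ> \<sigma>'"
    by (simp add: permutes_inv_o(2)[OF Bgrp_permutes[OF f]])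
  finally show ?thesis
    using assms by (metis Sgrp_comp Sgrp_inv absperm_Sgrp)
qed

section \<open>The length function of \<open>B_m\<close>\<close>

lemma sum_diff_sum_eq_subset:
  fixes f g :: "'a \<Rightarrow> 'b::ab_group_add"
  assumes "finite A" "D \<subseteq> A" "\<And>x. x \<in> A - D \<Longrightarrow> f x = g x"
  shows "sum f A - sum g A = sum f D - sum g D"
proof -
  have "sum f (A - D) = sum g (A - D)" by (rule sum.cong[OF refl assms(3)])
  then show ?thesis
    using sum.subset_diff[OF assms(2,1), of f] sum.subset_diff[OF assms(2,1), of g] by simp
qed

lemma sgen_bij_betw: "1 \<le> k \<Longrightarrow> k < int m \<Longrightarrow> bij_betw (sgen k) {1..int m} {1..int m}"
  by (rule bij_betw_byWitness[where f' = "sgen k"]) (auto simp: sgen_sgen sgen_pos)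

lemma sgen_less_sgen_iff:
  assumes "1 \<le> k" "0 < i" "0 < j" "(i, j) \<notin> {(k, k + 1), (k + 1, k)}"
  shows "sgen k i < sgen k j \<longleftrightarrow> i < j"
  using assms by (auto simp: sgen_pos)

definition invB_pair :: "(int \<Rightarrow> int) \<Rightarrow> int \<Rightarrow> int \<Rightarrow> int" where
  "invB_pair \<pi> i j = of_bool (i < j \<and> \<pi> j < \<pi> i) + of_bool (j < i \<and> \<pi> i < \<pi> j) + of_bool (\<pi> i + \<pi> j < 0)"

text \<open>Twice the classical length statistic \<open>inv + nsp + neg\<close> of type B: ordered pairs count each
  unordered pair twice, and the diagonal \<open>i = j\<close> of the sum condition counts \<open>neg\<close> once.\<close>
definition dbl_invB :: "nat \<Rightarrow> (int \<Rightarrow> int) \<Rightarrow> int" where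
  "dbl_invB m \<pi> = (\<Sum>(i, j) \<in> {1..int m} \<times> {1..int m}. invB_pair \<pi> i j) + (\<Sum>i\<in>{1..int m}. of_bool (\<pi> i < 0))"

lemma dbl_invB_comp_sgen:
  assumes "1 \<le> k" "k < int m"
  shows "dbl_invB m (\<pi> \<circ> sgen k) = dbl_invB m \<pi> + 2 * (of_bool (\<pi> k < \<pi> (k + 1)) - of_bool (\<pi> (k + 1) < \<pi> k))"
proof -
  let ?s = "sgen k" and ?I = "{1..int m}"
  let ?D = "{(k, k + 1), (k + 1, k)}"
  have bij: "bij_betw ?s ?I ?I" using assms by (rule sgen_bij_betw)
  have "(\<Sum>(i, j) \<in> ?I \<times> ?I. invB_pair (\<pi> \<circ> ?s) i j) - (\<Sum>(i, j) \<in> ?I \<times> ?I. invB_pair \<pi> (?s i) (?s j))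
      = (\<Sum>(i, j) \<in> ?D. invB_pair (\<pi> \<circ> ?s) i j) - (\<Sum>(i, j) \<in> ?D. invB_pair \<pi> (?s i) (?s j))"
  proof (rule sum_diff_sum_eq_subset)
    fix ij assume ij: "ij \<in> ?I \<times> ?I - ?D"
    obtain i j where "ij = (i, j)" by (cases ij)
    moreover have "0 < i" "0 < j" "(i, j) \<notin> ?D" using ij \<open>ij = (i, j)\<close> by auto
    moreover have "(j, i) \<notin> ?D" using \<open>(i, j) \<notin> ?D\<close> by auto
    ultimately show "(case ij of (i, j) \<Rightarrow> invB_pair (\<pi> \<circ> ?s) i j) = (case ij of (i, j) \<Rightarrow> invB_pair \<pi> (?s i) (?s j))"
      using sgen_less_sgen_iff[OF assms(1)] by (simp add: invB_pair_def)
  qed (use assms in auto)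
  also have "\<dots> = 2 * (of_bool (\<pi> k < \<pi> (k + 1)) - of_bool (\<pi> (k + 1) < \<pi> k))"
    using assms by (simp add: invB_pair_def sgen_pos)
  finally have "(\<Sum>(i, j) \<in> ?I \<times> ?I. invB_pair (\<pi> \<circ> ?s) i j) - (\<Sum>(i, j) \<in> ?I \<times> ?I. invB_pair \<pi> i j)
      = 2 * (of_bool (\<pi> k < \<pi> (k + 1)) - of_bool (\<pi> (k + 1) < \<pi> k))"
    using sum.reindex_bij_betw[OF bij_betw_map_prod[OF bij bij], of "\<lambda>(i, j). invB_pair \<pi> i j"]
    by (simp add: case_prod_beta)
  moreover have "(\<Sum>i\<in>?I. of_bool ((\<pi> \<circ> ?s) i < 0)) = (\<Sum>i\<in>?I. of_bool (\<pi> i < 0) :: int)"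
    using sum.reindex_bij_betw[OF bij, of "\<lambda>i. of_bool (\<pi> i < 0)"] by (simp del: sum_of_bool_eq)
  ultimately show ?thesis by (simp add: dbl_invB_def)
qed

lemma dbl_invB_comp_sgen0:
  assumes "\<pi> \<in> Bgrp m" "1 \<le> m"
  shows "dbl_invB m (\<pi> \<circ> sgen 0) = dbl_invB m \<pi> + (if 0 < \<pi> 1 then 2 else - 2)"
proof -
  let ?I = "{1..int m}" and ?\<pi>' = "\<pi> \<circ> sgen 0"
  have \<pi>': "?\<pi>' i = (if i = 1 then - \<pi> 1 else \<pi> i)" if "i \<in> ?I" for i
    using that Bgrp_odd[OF assms(1), of 1] by (simp add: sgen_def)
  have "\<pi> 1 \<noteq> 0"
    using Bgrp_signset[OF assms(1), of 1] assms(2) by (simp add: signset_iff)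
  txt \<open>A pair \<open>(1, j)\<close> with \<open>j \<noteq> 1\<close> contributes \<open>of_bool (\<pi> j < \<pi> 1) + of_bool (\<pi> j < - \<pi> 1)\<close>,
    which does not depend on the sign of \<open>\<pi> 1\<close>.\<close>
  have "(\<Sum>(i, j) \<in> ?I \<times> ?I. invB_pair ?\<pi>' i j) - (\<Sum>(i, j) \<in> ?I \<times> ?I. invB_pair \<pi> i j)
      = (\<Sum>(i, j) \<in> {(1, 1)}. invB_pair ?\<pi>' i j) - (\<Sum>(i, j) \<in> {(1, 1)}. invB_pair \<pi> i j)"
  proof (rule sum_diff_sum_eq_subset)
    fix ij assume ij: "ij \<in> ?I \<times> ?I - {(1, 1)}"
    obtain i j where "ij = (i, j)" by (cases ij)
    then show "(case ij of (i, j) \<Rightarrow> invB_pair ?\<pi>' i j) = (case ij of (i, j) \<Rightarrow> invB_pair \<pi> i j)"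
      using ij \<pi>'[of i] \<pi>'[of j] by (auto simp: invB_pair_def)
  qed (use assms in auto)
  moreover have "(\<Sum>i\<in>?I. of_bool (?\<pi>' i < 0)) - (\<Sum>i\<in>?I. of_bool (\<pi> i < 0))
      = of_bool (?\<pi>' 1 < 0) - (of_bool (\<pi> 1 < 0) :: int)"
    using assms(2) \<pi>' by (subst sum_diff_sum_eq_subset[where D = "{1}"]) (auto simp del: sum_of_bool_eq)
  ultimately show ?thesis
    using \<open>\<pi> 1 \<noteq> 0\<close> \<pi>'[of 1] assms(2) by (auto simp: dbl_invB_def invB_pair_def simp del: sum_of_bool_eq)
qed

lemma dbl_invB_id: "dbl_invB m id = 0"
  unfolding dbl_invB_def invB_pair_def by (auto intro!: sum.neutral)

lemma dbl_invB_nonneg: "0 \<le> dbl_invB m \<pi>"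
  by (simp add: dbl_invB_def invB_pair_def case_prod_beta sum_nonneg)

lemma dbl_invB_comp_sgen_le:
  assumes "\<pi> \<in> Bgrp m" "0 \<le> j" "j < int m"
  shows "dbl_invB m (\<pi> \<circ> sgen j) \<le> dbl_invB m \<pi> + 2"
proof (cases "j = 0")
  case True
  then show ?thesis using dbl_invB_comp_sgen0[OF assms(1)] assms(3) by simp
next
  case False
  then show ?thesis using dbl_invB_comp_sgen[of j m \<pi>] assms(2,3) by simp
qed

lemma dbl_invB_descent:
  assumes "\<pi> \<in> Bgrp m" "\<pi> \<noteq> id"
  obtains j where "0 \<le> j" "j < int m" "dbl_invB m (\<pi> \<circ> sgen j) = dbl_invB m \<pi> - 2"
proof -
  have "1 \<le> m" using assms Bgrp_0 by (cases m) auto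
  then have "\<pi> 1 \<in> signset m" by (intro Bgrp_signset[OF assms(1)]) (simp add: signset_iff)
  consider "\<pi> 1 < 0" | k where "1 \<le> k" "k < int m" "\<pi> (k + 1) < \<pi> k"
    | "0 < \<pi> 1" "\<forall>k. 1 \<le> k \<longrightarrow> k < int m \<longrightarrow> \<pi> k < \<pi> (k + 1)"
  proof (cases "\<pi> 1 < 0")
    case False
    then have "0 < \<pi> 1" using \<open>\<pi> 1 \<in> signset m\<close> by (simp add: signset_iff)
    have "\<pi> k \<noteq> \<pi> (k + 1)" for k using Bgrp_eq_iff[OF assms(1)] by simp
    then show ?thesis
      using that(2,3) \<open>0 < \<pi> 1\<close> by (meson not_less_iff_gr_or_eq)
  qed
  then show ?thesis
  proof cases
    case 1
    then show ?thesis using that[of 0] dbl_invB_comp_sgen0[OF assms(1) \<open>1 \<le> m\<close>] \<open>1 \<le> m\<close> by simp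
  next
    case (2 k)
    then show ?thesis using that[of k] dbl_invB_comp_sgen[of k m \<pi>] by simp
  next
    case 3
    then have mono: "strict_mono_on {1..int m} \<pi>" by (simp add: strict_mono_on_int_interval_iff)
    have "0 < \<pi> x" if "x \<in> {1..int m}" for x
      using 3 that strict_mono_onD[OF mono, of 1 x] by (cases "x = 1") auto
    then have "\<pi> \<in> Sgrp m" using assms(1) by (intro SgrpI)
    then have "\<pi> = id" using Sgrp_eq_id_if_strict_mono mono by blast
    with assms(2) show ?thesis by simp
  qed
qed

lemma wordprod_Nil: "wordprod [] = id"
  by (simp add: wordprod_def)

lemma wordprod_snoc: "wordprod (w @ [j]) = wordprod w \<circ> sgen j"
  by (induction w) (simp_all add: wordprod_def o_assoc)

lemma wordprod_Bgrp_dbl_invB_le: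
  assumes "set w \<subseteq> {0..int m - 1}"
  shows "wordprod w \<in> Bgrp m \<and> dbl_invB m (wordprod w) \<le> 2 * int (length w)"
  using assms
proof (induction w rule: rev_induct)
  case Nil
  show ?case by (simp add: wordprod_Nil id_def[symmetric] id_Bgrp dbl_invB_id)
next
  case (snoc j w)
  then have j: "0 \<le> j" "j < int m" and IH: "wordprod w \<in> Bgrp m" "dbl_invB m (wordprod w) \<le> 2 * int (length w)"
    by auto
  have "int (length (w @ [j])) = int (length w) + 1" by simp
  then show ?case
    using Bgrp_comp[OF IH(1) sgen_Bgrp[OF j]] dbl_invB_comp_sgen_le[OF IH(1) j] IH(2)
    unfolding wordprod_snoc by linarith
qed

lemma ex_word_dbl_invB:
  assumes "\<pi> \<in> Bgrp m"
  shows "\<exists>w. set w \<subseteq> {0..int m - 1} \<and> wordprod w = \<pi> \<and> 2 * int (length w) = dbl_invB m \<pi>"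
  using assms
proof (induction "nat (dbl_invB m \<pi>)" arbitrary: \<pi> rule: less_induct)
  case less
  show ?case
  proof (cases "\<pi> = id")
    case True
    then show ?thesis by (intro exI[of _ "[]"]) (simp add: wordprod_Nil dbl_invB_id)
  next
    case False
    then obtain j where j: "0 \<le> j" "j < int m" "dbl_invB m (\<pi> \<circ> sgen j) = dbl_invB m \<pi> - 2"
      using dbl_invB_descent[OF less.prems] by blast
    moreover have "\<pi> \<circ> sgen j \<in> Bgrp m" using j by (intro Bgrp_comp less.prems sgen_Bgrp)
    ultimately obtain w where "set w \<subseteq> {0..int m - 1}" "wordprod w = \<pi> \<circ> sgen j"
      "2 * int (length w) = dbl_invB m (\<pi> \<circ> sgen j)"
      using less.hyps dbl_invB_nonneg[of m "\<pi> \<circ> sgen j"] by force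
    then show ?thesis
      using j by (intro exI[of _ "w @ [j]"]) (simp add: wordprod_snoc comp_sgen_sgen)
  qed
qed

lemma lenB_eq_dbl_invB:
  assumes "\<pi> \<in> Bgrp m"
  shows "2 * int (lenB m \<pi>) = dbl_invB m \<pi>"
proof -
  obtain w where w: "set w \<subseteq> {0..int m - 1}" "wordprod w = \<pi>" "2 * int (length w) = dbl_invB m \<pi>"
    using ex_word_dbl_invB[OF assms] by blast
  have "lenB m \<pi> = length w"
    unfolding lenB_def
  proof (rule Least_equality)
    show "\<exists>v. length v = length w \<and> set v \<subseteq> {0..int m - 1} \<and> wordprod v = \<pi>"
      using w by blast
    show "length w \<le> k" if "\<exists>v. length v = k \<and> set v \<subseteq> {0..int m - 1} \<and> wordprod v = \<pi>" for k
      using that wordprod_Bgrp_dbl_invB_le w(3) by force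
  qed
  then show ?thesis using w(3) by simp
qed

lemma lenB_comp_sgen:
  assumes "\<pi> \<in> Bgrp m" "1 \<le> k" "k < int m"
  shows "int (lenB m (\<pi> \<circ> sgen k)) = int (lenB m \<pi>) + of_bool (\<pi> k < \<pi> (k + 1)) - of_bool (\<pi> (k + 1) < \<pi> k)"
proof -
  have "\<pi> \<circ> sgen k \<in> Bgrp m" using assms by (intro Bgrp_comp sgen_Bgrp) auto
  from lenB_eq_dbl_invB[OF this] show ?thesis
    using lenB_eq_dbl_invB[OF assms(1)] dbl_invB_comp_sgen[OF assms(2,3), of \<pi>]
    by simp
qed

section \<open>Left-to-right minima and descents of type A\<close>

definition ltr_min :: "(int \<Rightarrow> int) \<Rightarrow> int \<Rightarrow> bool" where
  "ltr_min \<sigma> j \<longleftrightarrow> (\<forall>i\<in>{1..<j}. \<sigma> j < \<sigma> i)"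

text \<open>Position \<open>1\<close> is always a left-to-right minimum but is not counted by \<open>delB\<close>.\<close>
lemma int_delB:
  assumes "1 \<le> m"
  shows "int (delB m \<sigma>) = (\<Sum>j\<in>{1..int m}. of_bool (ltr_min \<sigma> j)) - 1"
proof -
  let ?S = "{j \<in> {2..int m}. \<forall>i \<in> {1..<j}. \<sigma> i > \<sigma> j}"
  have "{1..int m} \<inter> {j. ltr_min \<sigma> j} = insert 1 ?S"
    using assms by (auto simp: ltr_min_def)
  moreover have "card (insert 1 ?S) = card ?S + 1"
    by (subst card_insert_disjoint) (auto intro: finite_subset[of _ "{2..int m}"])
  ultimately show ?thesis by (simp add: delB_def)
qed

lemma sgen_atLeastLessThan:
  assumes "1 \<le> k" "j \<noteq> k + 1" "i \<in> {1..<j}"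
  shows "sgen k i \<in> {1..<j}"
  using assms by (auto simp: sgen_pos)

lemma ltr_min_comp_sgen:
  assumes "1 \<le> k" "j \<noteq> k" "j \<noteq> k + 1"
  shows "ltr_min (\<sigma> \<circ> sgen k) j \<longleftrightarrow> ltr_min \<sigma> j"
proof (cases "1 < j")
  case True
  then have "sgen k j = j" using assms by (simp add: sgen_pos)
  moreover have "(\<forall>i\<in>{1..<j}. \<sigma> j < \<sigma> (sgen k i)) \<longleftrightarrow> (\<forall>i\<in>{1..<j}. \<sigma> j < \<sigma> i)"
  proof
    assume h: "\<forall>i\<in>{1..<j}. \<sigma> j < \<sigma> (sgen k i)"
    show "\<forall>i\<in>{1..<j}. \<sigma> j < \<sigma> i"
    proof
      fix i assume "i \<in> {1..<j}"
      then have "sgen k i \<in> {1..<j}" by (rule sgen_atLeastLessThan[OF assms(1,3)])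
      then show "\<sigma> j < \<sigma> i" using h sgen_sgen[of k i] assms(1) by force
    qed
  qed (use sgen_atLeastLessThan[OF assms(1,3)] in blast)
  ultimately show ?thesis by (simp add: ltr_min_def)
qed (simp add: ltr_min_def)

lemma ltr_min_succ:
  assumes "1 \<le> k"
  shows "ltr_min \<sigma> (k + 1) \<longleftrightarrow> (\<forall>l\<in>{1..<k}. \<sigma> (k + 1) < \<sigma> l) \<and> \<sigma> (k + 1) < \<sigma> k"
proof -
  have "{1..<k + 1} = insert k {1..<k}" using assms by auto
  then show ?thesis by (auto simp: ltr_min_def)
qed

lemma delB_comp_sgen:
  assumes "1 \<le> k" "k < int m"
  shows "int (delB m (\<sigma> \<circ> sgen k)) - int (delB m \<sigma>)
    = of_bool (\<forall>l\<in>{1..<k}. \<sigma> (k + 1) < \<sigma> l) + of_bool ((\<forall>l\<in>{1..<k}. \<sigma> k < \<sigma> l) \<and> \<sigma> k < \<sigma> (k + 1))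
      - of_bool (\<forall>l\<in>{1..<k}. \<sigma> k < \<sigma> l) - of_bool ((\<forall>l\<in>{1..<k}. \<sigma> (k + 1) < \<sigma> l) \<and> \<sigma> (k + 1) < \<sigma> k)"
proof -
  have "(\<Sum>j\<in>{1..int m}. of_bool (ltr_min (\<sigma> \<circ> sgen k) j)) - (\<Sum>j\<in>{1..int m}. of_bool (ltr_min \<sigma> j))
      = (\<Sum>j\<in>{k, k + 1}. of_bool (ltr_min (\<sigma> \<circ> sgen k) j)) - (\<Sum>j\<in>{k, k + 1}. of_bool (ltr_min \<sigma> j) :: int)"
    by (rule sum_diff_sum_eq_subset) (use assms ltr_min_comp_sgen in auto)
  then have "int (delB m (\<sigma> \<circ> sgen k)) - int (delB m \<sigma>)
      = of_bool (ltr_min (\<sigma> \<circ> sgen k) k) + of_bool (ltr_min (\<sigma> \<circ> sgen k) (k + 1))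
        - of_bool (ltr_min \<sigma> k) - of_bool (ltr_min \<sigma> (k + 1))"
    using assms by (simp add: int_delB del: sum_of_bool_eq)
  moreover have "ltr_min (\<sigma> \<circ> sgen k) k \<longleftrightarrow> (\<forall>l\<in>{1..<k}. \<sigma> (k + 1) < \<sigma> l)"
    using assms(1) by (simp add: ltr_min_def sgen_pos)
  moreover have "ltr_min (\<sigma> \<circ> sgen k) (k + 1) \<longleftrightarrow> (\<forall>l\<in>{1..<k}. \<sigma> k < \<sigma> l) \<and> \<sigma> k < \<sigma> (k + 1)"
    using assms(1) by (simp add: ltr_min_succ sgen_pos)
  ultimately show ?thesis
    using assms(1) by (simp add: ltr_min_succ ltr_min_def[of _ k])
qed

lemma lenL_comp_sgen:
  assumes "\<sigma> \<in> Bgrp m" "1 \<le> k" "k < int m"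
  shows "lenL m (\<sigma> \<circ> sgen k) = lenL m \<sigma> +
    (if \<sigma> k < \<sigma> (k + 1) then 1 - of_bool (\<forall>l\<in>{1..<k}. \<sigma> (k + 1) < \<sigma> l)
     else of_bool (\<forall>l\<in>{1..<k}. \<sigma> k < \<sigma> l) - 1)"
proof -
  define P where "P = (\<forall>l\<in>{1..<k}. \<sigma> (k + 1) < \<sigma> l)"
  define Q where "Q = (\<forall>l\<in>{1..<k}. \<sigma> k < \<sigma> l)"
  have "\<sigma> k \<noteq> \<sigma> (k + 1)" using Bgrp_eq_iff[OF assms(1)] by simp
  then show ?thesis
    using lenB_comp_sgen[OF assms] delB_comp_sgen[OF assms(2,3), of \<sigma>]
    unfolding P_def[symmetric] Q_def[symmetric] by (cases "\<sigma> k < \<sigma> (k + 1)") (simp_all add: lenL_def)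
qed

lemma lenL_comp_sgen1: "\<sigma> \<in> Bgrp m \<Longrightarrow> 2 \<le> m \<Longrightarrow> lenL m (\<sigma> \<circ> sgen 1) = lenL m \<sigma>"
  using lenL_comp_sgen[of \<sigma> m 1] by simp

lemma lenL_less_comp_sgen_iff:
  assumes "\<sigma> \<in> Bgrp m" "1 \<le> k" "k < int m"
  shows "lenL m \<sigma> < lenL m (\<sigma> \<circ> sgen k) \<longleftrightarrow> \<sigma> k < \<sigma> (k + 1) \<and> (\<exists>l\<in>{1..<k}. \<sigma> l < \<sigma> (k + 1))"
proof -
  have "\<sigma> l \<noteq> \<sigma> (k + 1)" if "l \<in> {1..<k}" for l using that Bgrp_eq_iff[OF assms(1)] by simp
  then have "(\<exists>l\<in>{1..<k}. \<sigma> l < \<sigma> (k + 1)) \<longleftrightarrow> \<not> (\<forall>l\<in>{1..<k}. \<sigma> (k + 1) < \<sigma> l)"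
    by (meson not_less_iff_gr_or_eq)
  then show ?thesis using lenL_comp_sgen[OF assms] by auto
qed

lemma strict_mono_on_or_comp_sgen1I:
  fixes \<sigma> :: "int \<Rightarrow> int"
  assumes "\<sigma> 1 \<noteq> \<sigma> 2"
    and asc: "\<And>k. k \<in> {2..<b} \<Longrightarrow> \<sigma> k < \<sigma> (k + 1) \<and> (\<exists>l\<in>{1..<k}. \<sigma> l < \<sigma> (k + 1))"
  shows "strict_mono_on {1..b} \<sigma> \<or> strict_mono_on {1..b} (\<sigma> \<circ> sgen 1)"
proof (cases "\<sigma> 1 < \<sigma> 2")
  case True
  have "\<sigma> k < \<sigma> (k + 1)" if "1 \<le> k" "k < b" for k
    using True asc that by (cases "k = 1") auto
  then show ?thesis unfolding strict_mono_on_int_interval_iff by blast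
next
  case False
  have "(\<sigma> \<circ> sgen 1) k < (\<sigma> \<circ> sgen 1) (k + 1)" if k: "1 \<le> k" "k < b" for k
  proof -
    consider "k = 1" | "k = 2" | "3 \<le> k" using k(1) by linarith
    then show ?thesis
    proof cases
      case 2
      have "{1..<2::int} = {1}" by auto
      then show ?thesis using 2 asc[of 2] k(2) sgen_one by simp
    qed (use False assms(1) asc k sgen_one in auto)
  qed
  then show ?thesis unfolding strict_mono_on_int_interval_iff by blast
qed

lemma strict_mono_on_or_comp_sgen1D:
  fixes \<sigma> :: "int \<Rightarrow> int"
  assumes "strict_mono_on {1..b} \<sigma> \<or> strict_mono_on {1..b} (\<sigma> \<circ> sgen 1)" "k \<in> {2..<b}"
  shows "\<sigma> k < \<sigma> (k + 1) \<and> (\<exists>l\<in>{1..<k}. \<sigma> l < \<sigma> (k + 1))"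
  using assms(1)
proof
  assume "strict_mono_on {1..b} \<sigma>"
  then show ?thesis using assms(2) strict_mono_onD[of "{1..b}" \<sigma>] by force
next
  assume "strict_mono_on {1..b} (\<sigma> \<circ> sgen 1)"
  then have mono: "\<sigma> (sgen 1 p) < \<sigma> (sgen 1 q)" if "1 \<le> p" "p < q" "q \<le> b" for p q
    using that strict_mono_onD[of "{1..b}" "\<sigma> \<circ> sgen 1" p q] by simp
  show ?thesis
    using assms(2) mono[of 1 3] mono[of k "k + 1"] mono[of 2 "k + 1"] sgen_one by (cases "k = 2") auto
qed

text \<open>Since \<open>lenL\<close> is invariant under \<open>sgen 1\<close>, the descents of \<open>\<pi>\<close> are governed by the
  ordinary steps \<open>sgen k\<close>, \<open>k \<ge> 2\<close>, applied to \<open>\<pi> \<circ> sgen 1\<close>.\<close>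
lemma desA_eq_0_iff:
  assumes "\<pi> \<in> Bgrp (n + 1)" "1 \<le> n"
  shows "desA n \<pi> = 0 \<longleftrightarrow> strict_mono_on {1..int n + 1} \<pi> \<or> strict_mono_on {1..int n + 1} (\<pi> \<circ> sgen 1)"
proof -
  define \<sigma> where "\<sigma> = \<pi> \<circ> sgen 1"
  have \<sigma>: "\<sigma> \<in> Bgrp (n + 1)" unfolding \<sigma>_def using assms by (intro Bgrp_comp sgen_Bgrp) auto
  have DesA: "i \<in> DesA n \<pi> \<longleftrightarrow> \<not> lenL (n + 1) \<sigma> < lenL (n + 1) (\<sigma> \<circ> sgen (i + 1))"
    if "i \<in> {1..int n - 1}" for i
  proof -
    have "\<pi> \<circ> agen i = \<sigma> \<circ> sgen (i + 1)" by (simp add: \<sigma>_def agen_def o_assoc)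
    moreover have "lenL (n + 1) \<pi> = lenL (n + 1) \<sigma>"
      using lenL_comp_sgen1[OF assms(1)] assms(2) by (simp add: \<sigma>_def)
    ultimately show ?thesis using that by (auto simp: DesA_def)
  qed
  have "finite (DesA n \<pi>)" by (rule finite_subset[of _ "{1..int n - 1}"]) (auto simp: DesA_def)
  then have "desA n \<pi> = 0 \<longleftrightarrow> (\<forall>i\<in>{1..int n - 1}. i \<notin> DesA n \<pi>)"
    by (auto simp: desA_def DesA_def)
  also have "\<dots> \<longleftrightarrow> (\<forall>i\<in>{1..int n - 1}. \<sigma> (i + 1) < \<sigma> (i + 1 + 1) \<and> (\<exists>l\<in>{1..<i + 1}. \<sigma> l < \<sigma> (i + 1 + 1)))"
    using DesA lenL_less_comp_sgen_iff[OF \<sigma>] by auto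
  also have "\<dots> \<longleftrightarrow> (\<forall>k\<in>{2..<int n + 1}. \<sigma> k < \<sigma> (k + 1) \<and> (\<exists>l\<in>{1..<k}. \<sigma> l < \<sigma> (k + 1)))"
  proof -
    have "{2..<int n + 1} = (\<lambda>i. i + 1) ` {1..int n - 1}"
      by (auto simp: image_iff intro: bexI[of _ "_ - 1"])
    then show ?thesis by (simp only: Ball_image_comp comp_def)
  qed
  also have "\<dots> \<longleftrightarrow> strict_mono_on {1..int n + 1} \<sigma> \<or> strict_mono_on {1..int n + 1} (\<sigma> \<circ> sgen 1)"
  proof
    assume "\<forall>k\<in>{2..<int n + 1}. \<sigma> k < \<sigma> (k + 1) \<and> (\<exists>l\<in>{1..<k}. \<sigma> l < \<sigma> (k + 1))"
    then show "strict_mono_on {1..int n + 1} \<sigma> \<or> strict_mono_on {1..int n + 1} (\<sigma> \<circ> sgen 1)"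
      using Bgrp_eq_iff[OF \<sigma>, of 1 2] by (intro strict_mono_on_or_comp_sgen1I) auto
  qed (use strict_mono_on_or_comp_sgen1D in blast)
  also have "\<dots> \<longleftrightarrow> strict_mono_on {1..int n + 1} (\<pi> \<circ> sgen 1) \<or> strict_mono_on {1..int n + 1} \<pi>"
    unfolding \<sigma>_def by (simp only: comp_sgen_sgen[OF zero_le_one])
  finally show ?thesis by blast
qed

section \<open>Increasing windows and parity\<close>

text \<open>A minimiser of \<open>lenB\<close> on the coset \<open>flip B \<circ> S_m\<close> has no descent \<open>sgen k\<close>, \<open>k \<ge> 1\<close>.\<close>
lemma ex_strict_mono_Neg_inv:
  assumes "B \<subseteq> {1..int m}"
  obtains \<tau> where "\<tau> \<in> Bgrp m" "strict_mono_on {1..int m} \<tau>" "Neg m (inv \<tau>) = B"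
proof -
  let ?f = "flip B"
  have f: "?f \<in> Bgrp m" by (rule flip_Bgrp[OF assms])
  obtain u where u: "u \<in> Sgrp m" and min: "\<And>v. v \<in> Sgrp m \<Longrightarrow> lenB m (?f \<circ> u) \<le> lenB m (?f \<circ> v)"
    using ex_has_least_nat[of "\<lambda>v. v \<in> Sgrp m" id "\<lambda>v. lenB m (?f \<circ> v)"] id_Sgrp by blast
  define \<tau> where "\<tau> = ?f \<circ> u"
  have \<tau>: "\<tau> \<in> Bgrp m" unfolding \<tau>_def by (rule Bgrp_comp[OF f Sgrp_Bgrp[OF u]])
  have "\<tau> k < \<tau> (k + 1)" if k: "1 \<le> k" "k < int m" for k
  proof (rule ccontr)
    assume "\<not> \<tau> k < \<tau> (k + 1)"
    then have "\<tau> (k + 1) < \<tau> k" using Bgrp_eq_iff[OF \<tau>, of k "k + 1"] by auto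
    then have "lenB m (\<tau> \<circ> sgen k) < lenB m \<tau>" using lenB_comp_sgen[OF \<tau> k] by simp
    moreover have "\<tau> \<circ> sgen k = ?f \<circ> (u \<circ> sgen k)" by (simp add: \<tau>_def o_assoc)
    ultimately show False
      using min[OF Sgrp_comp[OF u sgen_Sgrp[OF k]]] by (simp add: \<tau>_def)
  qed
  then have "strict_mono_on {1..int m} \<tau>" by (simp add: strict_mono_on_int_interval_iff)
  moreover have "Neg m (inv \<tau>) = B"
    unfolding \<tau>_def Neg_inv_comp_Sgrp[OF f u] by (rule Neg_inv_flip[OF assms])
  ultimately show ?thesis using that \<tau> by blast
qed

lemma strict_mono_Neg_inv_unique:
  assumes "\<tau> \<in> Bgrp m" "\<tau>' \<in> Bgrp m"
    and "strict_mono_on {1..int m} \<tau>" "strict_mono_on {1..int m} \<tau>'"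
    and "Neg m (inv \<tau>) = Neg m (inv \<tau>')"
  shows "\<tau> = \<tau>'"
proof -
  define u where "u = inv \<tau> \<circ> \<tau>'"
  have u: "u \<in> Sgrp m" unfolding u_def by (rule inv_comp_Sgrp_if_Neg_inv_eq[OF assms(1,2,5)])
  have \<tau>_u: "\<tau> \<circ> u = \<tau>'" by (simp add: u_def fun_eq_iff Bgrp_inverses(1)[OF assms(1)])
  have "strict_mono_on {1..int m} u"
  proof (rule strict_mono_onI)
    fix p q assume pq: "p \<in> {1..int m}" "q \<in> {1..int m}" "p < q"
    then have "\<tau> (u p) < \<tau> (u q)" using strict_mono_onD[OF assms(4)] \<tau>_u by auto
    then show "u p < u q"
      using strict_mono_on_less[OF assms(3) Sgrp_atLeastAtMost[OF u pq(1)] Sgrp_atLeastAtMost[OF u pq(2)]]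
      by simp
  qed
  then have "u = id" by (rule Sgrp_eq_id_if_strict_mono[OF u])
  then show ?thesis using \<tau>_u by simp
qed

definition pos_part :: "(int \<Rightarrow> int) \<Rightarrow> int \<Rightarrow> int" where
  "pos_part u x = (if 0 < x then u x else x)"

lemma Agrp_iff: "u \<in> Agrp m \<longleftrightarrow> u \<in> Sgrp m \<and> evenperm (pos_part u)"
  by (simp add: Agrp_def pos_part_def[abs_def])

lemma Lset_iff: "\<sigma> \<in> Lset m \<longleftrightarrow> \<sigma> \<in> Bgrp m \<and> evenperm (pos_part (absperm \<sigma>))"
  using absperm_Sgrp by (auto simp: Lset_def Agrp_iff)

lemma pos_part_comp: "u \<in> Sgrp m \<Longrightarrow> pos_part (v \<circ> u) = pos_part v \<circ> pos_part u"
  by (simp add: fun_eq_iff pos_part_def Sgrp_pos_iff)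

lemma permutation_pos_part:
  assumes "u \<in> Sgrp m"
  shows "permutation (pos_part u)"
proof -
  have "bij_betw (pos_part u) {1..int m} {1..int m}"
  proof (rule bij_betw_byWitness[where f' = "pos_part (inv u)"])
    show "\<forall>x\<in>{1..int m}. pos_part (inv u) (pos_part u x) = x"
      and "\<forall>x\<in>{1..int m}. pos_part u (pos_part (inv u) x) = x"
      by (simp_all add: pos_part_def Sgrp_pos_iff[OF assms] Sgrp_pos_iff[OF Sgrp_inv[OF assms]]
          Bgrp_inverses[OF Sgrp_Bgrp[OF assms]])
    show "pos_part u ` {1..int m} \<subseteq> {1..int m}" "pos_part (inv u) ` {1..int m} \<subseteq> {1..int m}"
      using Sgrp_atLeastAtMost[OF assms] Sgrp_atLeastAtMost[OF Sgrp_inv[OF assms]]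
      by (auto simp: pos_part_def simp del: atLeastAtMost_iff)
  qed
  moreover have "pos_part u x = x" if "x \<notin> {1..int m}" for x
    using that Bgrp_fixes[OF Sgrp_Bgrp[OF assms], of x] by (auto simp: pos_part_def signset_iff)
  ultimately have "pos_part u permutes {1..int m}" by (rule bij_imp_permutes)
  then show ?thesis using permutation_permutes by blast
qed

lemma evenperm_pos_part_absperm_comp:
  assumes "\<sigma> \<in> Bgrp m" "u \<in> Sgrp m"
  shows "evenperm (pos_part (absperm (\<sigma> \<circ> u))) \<longleftrightarrow> (evenperm (pos_part (absperm \<sigma>)) \<longleftrightarrow> evenperm (pos_part u))"
  unfolding absperm_comp_Sgrp[OF assms(2)] pos_part_comp[OF assms(2)]
  by (rule evenperm_comp[OF permutation_pos_part[OF absperm_Sgrp[OF assms(1)]] permutation_pos_part[OF assms(2)]])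

lemma Lset_comp_Agrp: "\<sigma> \<in> Lset m \<Longrightarrow> u \<in> Agrp m \<Longrightarrow> \<sigma> \<circ> u \<in> Lset m"
  using evenperm_pos_part_absperm_comp by (auto simp: Lset_iff Agrp_iff intro: Bgrp_comp Sgrp_Bgrp)

lemma Agrp_if_Lset_comp: "\<sigma> \<in> Lset m \<Longrightarrow> \<sigma> \<circ> u \<in> Lset m \<Longrightarrow> u \<in> Sgrp m \<Longrightarrow> u \<in> Agrp m"
  using evenperm_pos_part_absperm_comp by (auto simp: Lset_iff Agrp_iff)

lemma Lset_comp_sgen1_iff:
  assumes "\<sigma> \<in> Bgrp m" "2 \<le> m"
  shows "\<sigma> \<circ> sgen 1 \<in> Lset m \<longleftrightarrow> \<sigma> \<notin> Lset m"
proof -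
  have s1: "sgen 1 \<in> Sgrp m" using assms(2) by (intro sgen_Sgrp) auto
  have "pos_part (sgen 1) = Transposition.transpose 1 2"
    by (auto simp: fun_eq_iff pos_part_def sgen_def Transposition.transpose_def)
  then have "\<not> evenperm (pos_part (sgen 1))" by (simp add: evenperm_swap)
  then show ?thesis
    using evenperm_pos_part_absperm_comp[OF assms(1) s1] Bgrp_comp[OF assms(1) Sgrp_Bgrp[OF s1]] assms(1)
    by (auto simp: Lset_iff)
qed

section \<open>The decomposition of \<open>L_m\<close>\<close>

lemma eq_or_eq_comp_sgen1_if_Neg_inv_eq:
  assumes "2 \<le> m" "\<tau> \<in> Bgrp m" "strict_mono_on {1..int m} \<tau>"
    and "\<sigma> \<in> Bgrp m" "strict_mono_on {1..int m} \<sigma> \<or> strict_mono_on {1..int m} (\<sigma> \<circ> sgen 1)"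
    and "Neg m (inv \<sigma>) = Neg m (inv \<tau>)"
  shows "\<sigma> = \<tau> \<or> \<sigma> = \<tau> \<circ> sgen 1"
  using assms(5)
proof
  assume "strict_mono_on {1..int m} \<sigma>"
  then show ?thesis using strict_mono_Neg_inv_unique[OF assms(2,4,3)] assms(6) by simp
next
  assume mono: "strict_mono_on {1..int m} (\<sigma> \<circ> sgen 1)"
  have s1: "sgen 1 \<in> Sgrp m" using assms(1) by (intro sgen_Sgrp) auto
  have "Neg m (inv \<tau>) = Neg m (inv (\<sigma> \<circ> sgen 1))"
    using Neg_inv_comp_Sgrp[OF assms(4) s1] assms(6) by simp
  then have "\<tau> = \<sigma> \<circ> sgen 1"
    by (rule strict_mono_Neg_inv_unique[OF assms(2) Bgrp_comp[OF assms(4) Sgrp_Bgrp[OF s1]] assms(3) mono])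
  then show ?thesis by (simp add: comp_sgen_sgen)
qed

lemma ex1_Lset_Neg_inv:
  assumes "2 \<le> m" "B \<subseteq> {1..int m}"
  shows "\<exists>!\<sigma>. \<sigma> \<in> Lset m \<and> (strict_mono_on {1..int m} \<sigma> \<or> strict_mono_on {1..int m} (\<sigma> \<circ> sgen 1))
    \<and> B = Neg m (inv \<sigma>)"
proof -
  obtain \<tau> where \<tau>: "\<tau> \<in> Bgrp m" "strict_mono_on {1..int m} \<tau>" "Neg m (inv \<tau>) = B"
    using ex_strict_mono_Neg_inv[OF assms(2)] by blast
  have s1: "sgen 1 \<in> Sgrp m" using assms(1) by (intro sgen_Sgrp) auto
  have \<tau>_s1: "Neg m (inv (\<tau> \<circ> sgen 1)) = B" "\<tau> \<circ> sgen 1 \<circ> sgen 1 = \<tau>"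
    using Neg_inv_comp_Sgrp[OF \<tau>(1) s1] \<tau>(3) by (simp_all add: comp_sgen_sgen)
  have parity: "\<tau> \<circ> sgen 1 \<in> Lset m \<longleftrightarrow> \<tau> \<notin> Lset m"
    by (rule Lset_comp_sgen1_iff[OF \<tau>(1) assms(1)])
  show ?thesis
  proof (rule ex_ex1I)
    show "\<exists>\<sigma>. \<sigma> \<in> Lset m \<and> (strict_mono_on {1..int m} \<sigma> \<or> strict_mono_on {1..int m} (\<sigma> \<circ> sgen 1))
      \<and> B = Neg m (inv \<sigma>)"
      using \<tau> \<tau>_s1 parity by metis
  next
    fix \<sigma> \<sigma>'
    assume "\<sigma> \<in> Lset m \<and> (strict_mono_on {1..int m} \<sigma> \<or> strict_mono_on {1..int m} (\<sigma> \<circ> sgen 1))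
        \<and> B = Neg m (inv \<sigma>)"
      and "\<sigma>' \<in> Lset m \<and> (strict_mono_on {1..int m} \<sigma>' \<or> strict_mono_on {1..int m} (\<sigma>' \<circ> sgen 1))
        \<and> B = Neg m (inv \<sigma>')"
    then show "\<sigma> = \<sigma>'"
      using eq_or_eq_comp_sgen1_if_Neg_inv_eq[OF assms(1) \<tau>(1,2), of \<sigma>]
        eq_or_eq_comp_sgen1_if_Neg_inv_eq[OF assms(1) \<tau>(1,2), of \<sigma>'] \<tau>(3) parity
      by (auto simp: Lset_def)
  qed
qed

lemma Lset_Neg_inv_subset_eq_UN:
  assumes "T \<subseteq> Lset m" and unique: "\<And>B. B \<subseteq> {1..int m} \<Longrightarrow> \<exists>!\<sigma>. \<sigma> \<in> T \<and> B = Neg m (inv \<sigma>)"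
  shows "{\<pi> \<in> Lset m. Neg m (inv \<pi>) \<subseteq> B} = (\<Union>u \<in> Agrp m. {\<sigma> \<circ> u | \<sigma>. \<sigma> \<in> T \<and> Neg m (inv \<sigma>) \<subseteq> B})"
proof (intro equalityI subsetI)
  fix \<pi> assume "\<pi> \<in> {\<pi> \<in> Lset m. Neg m (inv \<pi>) \<subseteq> B}"
  then have \<pi>: "\<pi> \<in> Lset m" "\<pi> \<in> Bgrp m" "Neg m (inv \<pi>) \<subseteq> B" by (auto simp: Lset_def)
  obtain \<sigma> where \<sigma>: "\<sigma> \<in> T" "Neg m (inv \<pi>) = Neg m (inv \<sigma>)"
    using unique[OF Neg_subset] by blast
  then have \<sigma>_L: "\<sigma> \<in> Lset m" and \<sigma>_B: "\<sigma> \<in> Bgrp m" using assms(1) by (auto simp: Lset_def)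
  define u where "u = inv \<sigma> \<circ> \<pi>"
  have "u \<in> Sgrp m" unfolding u_def by (rule inv_comp_Sgrp_if_Neg_inv_eq[OF \<sigma>_B \<pi>(2) \<sigma>(2)[symmetric]])
  moreover have "\<pi> = \<sigma> \<circ> u"
    by (simp add: u_def o_assoc permutes_inv_o(1)[OF Bgrp_permutes[OF \<sigma>_B]])
  ultimately have "u \<in> Agrp m" using Agrp_if_Lset_comp[OF \<sigma>_L] \<pi>(1) by simp
  then show "\<pi> \<in> (\<Union>u \<in> Agrp m. {\<sigma> \<circ> u | \<sigma>. \<sigma> \<in> T \<and> Neg m (inv \<sigma>) \<subseteq> B})"
    using \<open>\<pi> = \<sigma> \<circ> u\<close> \<sigma> \<pi>(3) by auto
next
  fix \<pi> assume "\<pi> \<in> (\<Union>u \<in> Agrp m. {\<sigma> \<circ> u | \<sigma>. \<sigma> \<in> T \<and> Neg m (inv \<sigma>) \<subseteq> B})"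
  then obtain u \<sigma> where "u \<in> Agrp m" "\<sigma> \<in> T" "Neg m (inv \<sigma>) \<subseteq> B" "\<pi> = \<sigma> \<circ> u" by blast
  moreover have "\<sigma> \<in> Lset m" "\<sigma> \<in> Bgrp m" "u \<in> Sgrp m"
    using calculation assms(1) by (auto simp: Lset_def Agrp_iff)
  ultimately show "\<pi> \<in> {\<pi> \<in> Lset m. Neg m (inv \<pi>) \<subseteq> B}"
    using Lset_comp_Agrp Neg_inv_comp_Sgrp by auto
qed

lemma disjoint_family_on_comp_Agrp:
  assumes "T \<subseteq> Bgrp m" and unique: "\<And>B. B \<subseteq> {1..int m} \<Longrightarrow> \<exists>!\<sigma>. \<sigma> \<in> T \<and> B = Neg m (inv \<sigma>)"
  shows "disjoint_family_on (\<lambda>u. {\<sigma> \<circ> u | \<sigma>. \<sigma> \<in> T \<and> P \<sigma>}) (Agrp m)"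
  unfolding disjoint_family_on_def
proof (intro ballI impI, rule ccontr)
  fix u u' assume u: "u \<in> Agrp m" "u' \<in> Agrp m" "u \<noteq> u'"
    and "{\<sigma> \<circ> u | \<sigma>. \<sigma> \<in> T \<and> P \<sigma>} \<inter> {\<sigma> \<circ> u' | \<sigma>. \<sigma> \<in> T \<and> P \<sigma>} \<noteq> {}"
  then obtain \<sigma> \<sigma>' where \<sigma>: "\<sigma> \<in> T" "\<sigma>' \<in> T" "\<sigma> \<circ> u = \<sigma>' \<circ> u'" by blast
  have "u \<in> Sgrp m" "u' \<in> Sgrp m" using u by (simp_all add: Agrp_iff)
  then have "Neg m (inv \<sigma>) = Neg m (inv \<sigma>')"
    using Neg_inv_comp_Sgrp \<sigma> assms(1) by (metis subsetD)
  then have "\<sigma> = \<sigma>'" using unique[OF Neg_subset] \<sigma>(1,2) by blast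
  then have "inv \<sigma> \<circ> (\<sigma> \<circ> u) = inv \<sigma> \<circ> (\<sigma> \<circ> u')" using \<sigma>(3) by simp
  then show False
    using u(3) \<sigma>(1) assms(1) by (auto simp: o_assoc permutes_inv_o(2)[OF Bgrp_permutes])
qed

theorem corollary3p6:
  fixes n :: nat and T :: "(int \<Rightarrow> int) set"
  assumes "n \<ge> 1"
    and "T = {\<sigma> \<in> Lset (n + 1). desA n \<sigma> = 0}"
  shows "(\<forall>B \<subseteq> {1..int n + 1}. \<exists>!\<sigma>. \<sigma> \<in> T \<and> B = Neg (n + 1) (inv \<sigma>))
    \<and> (\<forall>B \<subseteq> {1..int n + 1}.
          {\<pi> \<in> Lset (n + 1). Neg (n + 1) (inv \<pi>) \<subseteq> B}
            = (\<Union>u \<in> Agrp (n + 1). {\<sigma> \<circ> u | \<sigma>. \<sigma> \<in> T \<and> Neg (n + 1) (inv \<sigma>) \<subseteq> B})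
          \<and> disjoint_family_on (\<lambda>u. {\<sigma> \<circ> u | \<sigma>. \<sigma> \<in> T \<and> Neg (n + 1) (inv \<sigma>) \<subseteq> B})
              (Agrp (n + 1)))"
proof -
  have T: "T = {\<sigma> \<in> Lset (n + 1).
      strict_mono_on {1..int n + 1} \<sigma> \<or> strict_mono_on {1..int n + 1} (\<sigma> \<circ> sgen 1)}"
    using assms desA_eq_0_iff by (auto simp: Lset_def)
  have "2 \<le> n + 1" using assms(1) by simp
  have unique: "\<exists>!\<sigma>. \<sigma> \<in> T \<and> B = Neg (n + 1) (inv \<sigma>)" if "B \<subseteq> {1..int (n + 1)}" for B
    using ex1_Lset_Neg_inv[OF \<open>2 \<le> n + 1\<close> that, unfolded of_nat_add of_nat_1] unfolding T
    by (simp only: mem_Collect_eq conj_assoc)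
  have "T \<subseteq> Lset (n + 1)" "T \<subseteq> Bgrp (n + 1)" unfolding T by (auto simp: Lset_def)
  note decomposition = Lset_Neg_inv_subset_eq_UN[OF this(1) unique] disjoint_family_on_comp_Agrp[OF this(2) unique]
  have "int n + 1 = int (n + 1)" by simp
  then show ?thesis by (simp only:) (intro conjI allI impI unique decomposition)
qed

end
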